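(* Let $d\ge1$ and $a_1,\dots,a_d>0$, and define $F:(0,\infty)\to\mathbb{R}$ by $$F(k)=2k\sum_{j=1}^d\tan\left(\frac{\pi}{2}\left(\frac{ka_j}{\pi}-\left\lfloor\frac{ka_j}{\pi}\right\rfloor\right)\right).$$ Then: (i) a point $k>0$ is a discontinuity of $F$ if and only if $k=m\pi/a_j$ for some $j\in\{1,\dots,d\}$ and some $m\in\mathbb{N}$; (ii) $F$ is strictly increasing on each interval of continuity; (iii) for every $m\in\mathbb{N}$ and $j\in\{1,\dots,d\}$, $\lim_{k\nearrow m\pi/a_j}F(k)=+\infty$.
   Context: $\lfloor\cdot\rfloor$ denotes the floor function and $\mathbb{N}=\{1,2,3,\dots\}$. *)

theory Defs
  imports "HOL-Analysis.Analysis"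
begin

definition Ffun :: "nat \<Rightarrow> (nat \<Rightarrow> real) \<Rightarrow> real \<Rightarrow> real" where
  "Ffun d a k = 2 * k * (\<Sum>j=1..d. tan (pi / 2 * (k * a j / pi - of_int \<lfloor>k * a j / pi\<rfloor>)))"

end

theory Submission
  imports Defs
begin

(*
  Each summand tan(pi/2 * frac(k a_j / pi)) is tan composed with a sawtooth of period pi/a_j:
  between consecutive multiples of pi/a_j it increases continuously from 0 to +\<infinity>, and it
  drops back to 0 at each multiple. All summands are nonnegative, so one summand tending to
  +\<infinity> drives F to +\<infinity>; this yields both the discontinuities and the limits. On an
  interval where F is continuous no floor can jump, so every summand increases, and so does the
  positive factor 2k.
*)

definition tan_sawtooth :: "real \<Rightarrow> real \<Rightarrow> real" where
  "tan_sawtooth c k = tan (pi / 2 * frac (k * c / pi))"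

lemma Ffun_eq_sum_tan_sawtooth: "Ffun d a k = 2 * k * (\<Sum>j=1..d. tan_sawtooth (a j) k)"
  by (simp add: Ffun_def tan_sawtooth_def frac_def)

lemma half_pi_frac_bounds: "0 \<le> pi / 2 * frac x" "pi / 2 * frac x < pi / 2"
  using frac_lt_1[of x] by auto

lemma tan_sawtooth_nonneg: "0 \<le> tan_sawtooth c k"
proof (cases "k * c / pi \<in> \<int>")
  case False
  then show ?thesis
    unfolding tan_sawtooth_def using half_pi_frac_bounds by (intro less_imp_le tan_gt_zero) auto
next
  case True
  then show ?thesis by (simp add: tan_sawtooth_def frac_eq_0_iff[THEN iffD2])
qed

lemma isCont_tan_sawtooth:
  assumes "k * c / pi \<notin> \<int>"
  shows "isCont (tan_sawtooth c) k"
proof -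
  have "isCont (\<lambda>k. k * c / pi) k"
    by (intro continuous_intros) simp
  from isCont_o2[OF this continuous_frac[OF assms]]
  have "isCont (\<lambda>k. frac (k * c / pi)) k" .
  moreover have "cos (pi / 2 * frac (k * c / pi)) \<noteq> 0"
    using half_pi_frac_bounds[of "k * c / pi"] pi_gt_zero
    by (intro order.strict_implies_not_eq[symmetric] cos_gt_zero_pi) linarith+
  ultimately show ?thesis
    unfolding tan_sawtooth_def by (intro continuous_intros isCont_o2[OF _ isCont_tan]) auto
qed

lemma tan_sawtooth_at_left_pole:
  assumes "c > 0"
  shows "filterlim (tan_sawtooth c) at_top (at_left (of_int n * pi / c))"
proof -
  define p where "p = of_int n * pi / c"
  define h where "h = (\<lambda>k. pi / 2 * (k * c / pi - of_int (n - 1)))"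
  have "(of_int n - 1) * pi / c < p"
    unfolding p_def using assms by (simp add: divide_strict_right_mono)
  then have near: "\<forall>\<^sub>F k in at_left p. n - 1 < k * c / pi \<and> k * c / pi < n"
    by (rule eventually_mono[OF eventually_at_left_real]) (use assms in \<open>auto simp: p_def field_simps\<close>)
  have tan_h_eq: "\<forall>\<^sub>F k in at_left p. tan (h k) = tan_sawtooth c k"
    using near
  proof eventually_elim
    case (elim k)
    then have "\<lfloor>k * c / pi\<rfloor> = n - 1" by (intro floor_unique) auto
    then show ?case by (simp add: h_def tan_sawtooth_def frac_def)
  qed
  have "filterlim h (at_left (pi / 2)) (at_left p)"
  proof (rule tendsto_imp_filterlim_at_left)
    have "h p = pi / 2" unfolding h_def p_def using assms by (simp add: field_simps)
    moreover have "(h \<longlongrightarrow> h p) (at_left p)" unfolding h_def by (intro tendsto_intros) simp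
    ultimately show "(h \<longlongrightarrow> pi / 2) (at_left p)" by (simp only:)
    show "\<forall>\<^sub>F k in at_left p. h k < pi / 2"
      using near by eventually_elim (simp add: h_def field_simps)
  qed
  from filterlim_compose[OF filterlim_tan_at_left this]
  show ?thesis
    unfolding p_def[symmetric] using filterlim_cong[OF refl refl tan_h_eq] by simp
qed

lemma tan_sawtooth_strict_mono:
  assumes "c > 0" "x < y" "\<lfloor>x * c / pi\<rfloor> = \<lfloor>y * c / pi\<rfloor>"
  shows "tan_sawtooth c x < tan_sawtooth c y"
proof -
  have "frac (x * c / pi) < frac (y * c / pi)"
    using assms by (simp add: frac_def divide_strict_right_mono)
  then show ?thesis
    unfolding tan_sawtooth_def using half_pi_frac_bounds pi_gt_zero
    by (intro tan_monotone) (auto intro: less_le_trans[of _ 0])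
qed

lemma mult_div_pi_in_Ints_iff:
  assumes "c > 0" "k > 0"
  shows "k * c / pi \<in> \<int> \<longleftrightarrow> (\<exists>m::nat. m \<ge> 1 \<and> k = real m * pi / c)"
proof
  assume "k * c / pi \<in> \<int>"
  then obtain n where n: "k * c / pi = of_int n" by (auto elim: Ints_cases)
  moreover have "k * c / pi > 0" using assms by simp
  ultimately have "n \<ge> 1" by simp
  with n assms have "k = real (nat n) * pi / c" by (simp add: field_simps)
  with \<open>n \<ge> 1\<close> show "\<exists>m::nat. m \<ge> 1 \<and> k = real m * pi / c" by (intro exI[of _ "nat n"]) auto
qed (use assms in auto)

lemma not_isCont_if_filterlim_at_top_at_left:
  fixes f :: "real \<Rightarrow> real"
  assumes "filterlim f at_top (at_left x)"
  shows "\<not> isCont f x"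
proof
  assume "isCont f x"
  then have "(f \<longlongrightarrow> f x) (at_left x)"
    unfolding isCont_def by (rule tendsto_mono[OF at_le, rotated]) simp
  moreover have "filterlim f at_infinity (at_left x)"
    using assms by (rule filterlim_at_top_imp_at_infinity)
  ultimately show False
    using not_tendsto_and_filterlim_at_infinity[of "at_left x"] by auto
qed

lemma Ffun_at_left_pole:
  assumes j: "j \<in> {1..d}" and "a j > 0" "n > 0"
  shows "filterlim (Ffun d a) at_top (at_left (of_int n * pi / a j))"
proof -
  define p where "p = of_int n * pi / a j"
  have "p > 0" unfolding p_def using assms by simp
  have "filterlim (\<lambda>k. p * tan_sawtooth (a j) k) at_top (at_left p)"
    unfolding p_def
    by (intro filterlim_tendsto_pos_mult_at_top[OF tendsto_const] tan_sawtooth_at_left_pole)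
      (use assms in simp_all)
  moreover have "\<forall>\<^sub>F k in at_left p. k \<in> {p / 2<..<p}"
    using \<open>p > 0\<close> by (intro eventually_at_left_real) simp
  then have "\<forall>\<^sub>F k in at_left p. p * tan_sawtooth (a j) k \<le> Ffun d a k"
  proof (rule eventually_mono)
    fix k assume "k \<in> {p / 2<..<p}"
    then have "p \<le> 2 * k" by simp
    moreover have "tan_sawtooth (a j) k \<le> (\<Sum>i=1..d. tan_sawtooth (a i) k)"
      using j by (intro member_le_sum) (auto simp: tan_sawtooth_nonneg)
    ultimately show "p * tan_sawtooth (a j) k \<le> Ffun d a k"
      unfolding Ffun_eq_sum_tan_sawtooth using \<open>p > 0\<close>
      by (intro mult_mono tan_sawtooth_nonneg) auto
  qed
  ultimately show ?thesis
    unfolding p_def[symmetric] by (rule filterlim_at_top_mono)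
qed

lemma isCont_Ffun_iff:
  assumes a: "\<And>j. j \<in> {1..d} \<Longrightarrow> a j > 0" and "k > 0"
  shows "isCont (Ffun d a) k \<longleftrightarrow> (\<forall>j\<in>{1..d}. k * a j / pi \<notin> \<int>)"
proof
  assume "\<forall>j\<in>{1..d}. k * a j / pi \<notin> \<int>"
  then show "isCont (Ffun d a) k"
    unfolding Ffun_eq_sum_tan_sawtooth[abs_def] by (intro continuous_intros isCont_tan_sawtooth) auto
next
  assume cont: "isCont (Ffun d a) k"
  show "\<forall>j\<in>{1..d}. k * a j / pi \<notin> \<int>"
  proof (intro ballI notI)
    fix j assume j: "j \<in> {1..d}" and "k * a j / pi \<in> \<int>"
    then obtain n where n: "k * a j / pi = of_int n" by (auto elim: Ints_cases)
    moreover have "k * a j / pi > 0" using a[OF j] \<open>k > 0\<close> by simp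
    ultimately have "n > 0" by simp
    have "k = of_int n * pi / a j" using n a[OF j] by (simp add: field_simps)
    with Ffun_at_left_pole[of j d a n] a[OF j] \<open>n > 0\<close> j cont show False
      using not_isCont_if_filterlim_at_top_at_left by blast
  qed
qed

lemma floor_eq_if_isCont_Ffun_on:
  assumes a: "\<And>j. j \<in> {1..d} \<Longrightarrow> a j > 0" and "0 < x" "x \<le> y"
    and cont: "\<forall>t\<in>{x..y}. isCont (Ffun d a) t" and j: "j \<in> {1..d}"
  shows "\<lfloor>x * a j / pi\<rfloor> = \<lfloor>y * a j / pi\<rfloor>"
proof (rule ccontr)
  assume "\<lfloor>x * a j / pi\<rfloor> \<noteq> \<lfloor>y * a j / pi\<rfloor>"
  moreover have "\<lfloor>x * a j / pi\<rfloor> \<le> \<lfloor>y * a j / pi\<rfloor>"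
    using \<open>x \<le> y\<close> less_imp_le[OF a[OF j]]
    by (intro floor_mono divide_right_mono mult_right_mono) auto
  ultimately have "x * a j / pi < \<lfloor>y * a j / pi\<rfloor>"
    by (simp add: floor_less_iff[symmetric])
  define t where "t = \<lfloor>y * a j / pi\<rfloor> * pi / a j"
  have "x < t"
    using \<open>x * a j / pi < \<lfloor>y * a j / pi\<rfloor>\<close> a[OF j] by (simp add: t_def field_simps)
  moreover have "t \<le> y"
    using mult_right_mono[OF of_int_floor_le[of "y * a j / pi"], of "pi / a j"] a[OF j]
    by (simp add: t_def)
  moreover have "t * a j / pi \<in> \<int>" unfolding t_def using a[OF j] by simp
  ultimately show False
    using cont isCont_Ffun_iff[where d = d and a = a and k = t] a \<open>0 < x\<close> j by auto
qed

lemma Ffun_strict_mono_if_floor_eq: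
  assumes "d \<ge> 1" and a: "\<And>j. j \<in> {1..d} \<Longrightarrow> a j > 0" and "0 < x" "x < y"
    and floor_eq: "\<And>j. j \<in> {1..d} \<Longrightarrow> \<lfloor>x * a j / pi\<rfloor> = \<lfloor>y * a j / pi\<rfloor>"
  shows "Ffun d a x < Ffun d a y"
proof -
  have sum_less: "(\<Sum>j=1..d. tan_sawtooth (a j) x) < (\<Sum>j=1..d. tan_sawtooth (a j) y)"
    using \<open>d \<ge> 1\<close> a floor_eq \<open>x < y\<close>
    by (intro sum_strict_mono) (auto intro: tan_sawtooth_strict_mono)
  have "2 * x * (\<Sum>j=1..d. tan_sawtooth (a j) x) \<le> 2 * y * (\<Sum>j=1..d. tan_sawtooth (a j) x)"
    using \<open>x < y\<close> by (intro mult_right_mono sum_nonneg tan_sawtooth_nonneg) auto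
  also have "\<dots> < 2 * y * (\<Sum>j=1..d. tan_sawtooth (a j) y)"
    using sum_less \<open>0 < x\<close> \<open>x < y\<close> by simp
  finally show ?thesis unfolding Ffun_eq_sum_tan_sawtooth .
qed

theorem lemma3p1:
  fixes d :: nat and a :: "nat \<Rightarrow> real"
  assumes "d \<ge> 1" and "\<And>j. j \<in> {1..d} \<Longrightarrow> a j > 0"
  shows "(\<forall>k>0. \<not> isCont (Ffun d a) k \<longleftrightarrow>
            (\<exists>j\<in>{1..d}. \<exists>m::nat. m \<ge> 1 \<and> k = real m * pi / a j))
       \<and> (\<forall>x y. 0 < x \<longrightarrow> x < y \<longrightarrow> (\<forall>t\<in>{x..y}. isCont (Ffun d a) t)
            \<longrightarrow> Ffun d a x < Ffun d a y)
       \<and> (\<forall>j\<in>{1..d}. \<forall>m::nat. m \<ge> 1 \<longrightarrow>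
            filterlim (Ffun d a) at_top (at_left (real m * pi / a j)))"
proof (intro conjI allI impI ballI)
  fix k :: real assume "k > 0"
  then show "\<not> isCont (Ffun d a) k \<longleftrightarrow>
      (\<exists>j\<in>{1..d}. \<exists>m::nat. m \<ge> 1 \<and> k = real m * pi / a j)"
    using isCont_Ffun_iff[where d = d and a = a] mult_div_pi_in_Ints_iff assms(2) by auto
next
  fix x y :: real
  assume "0 < x" "x < y" "\<forall>t\<in>{x..y}. isCont (Ffun d a) t"
  then show "Ffun d a x < Ffun d a y"
    using assms floor_eq_if_isCont_Ffun_on[where d = d and a = a]
    by (intro Ffun_strict_mono_if_floor_eq) auto
next
  fix j and m :: nat assume "j \<in> {1..d}" "m \<ge> 1"
  then show "filterlim (Ffun d a) at_top (at_left (real m * pi / a j))"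
    using Ffun_at_left_pole[of j d a "int m"] assms(2) by simp
qed

end
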